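(* Let $\alpha\ge1$, let $B\le B_a$ be positive integers, let $\ell,I$ be integers with $0\le\ell\le B_a$ and $I\ge\ell$, and let $(w_k)_{k\le I}$ be reals with $w_k=0$ for $k\le0$ and $0\le w_1\le\cdots\le w_I$. With $\phi_i,\psi_i,\Omega$ as in the context, let $\Psi:=\sum_{i=I-\ell+1}^{I}\psi_i$ and $$\tau:=1+\frac{1}{E^{\alpha}-1}\cdot\frac{1}{\alpha_B}\left(E^{\alpha}-\frac{E^{\alpha}-1}{\alpha_{B_a}}\right).$$ Then $$\sum_{i=I-B_a+1}^{I-\ell}\phi_i w_i+\sum_{i=I-\ell+1}^{I}\psi_i w_i+w_{I-B_a}\,\Omega\ \le\ M\sum_{i=I-B_a+1}^{I}w_i,$$ where $M:=\max\{\tau,\Psi/\ell\}$ if $\ell\ge1$ and $M:=\tau$ if $\ell=0$.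
   Context: Notation: $E:=(1+1/B_a)^{B_a}$, $c:=\frac{E^{\alpha/B_a}-1}{E^{\alpha}-1}$, $e_B:=(1+1/B)^B$, $\alpha_B:=B(e_B^{\alpha/B}-1)$, $\alpha_{B_a}:=B_a(E^{\alpha/B_a}-1)$. The coefficients are $\phi_i:=(B_a-\ell)\,c\,E^{\alpha(I-i)/B_a}+\frac{1}{\alpha_B}\cdot\frac{E^{\alpha}-E^{\alpha(I-\ell-i)/B_a}}{E^{\alpha}-1}$, $\psi_i:=1+(B_a-\ell)\,c\,E^{\alpha(I-i)/B_a}$, and $\Omega:=\frac{1}{\alpha_B}\cdot\frac{1}{E^{\alpha}-1}\left(\ell E^{\alpha}-\frac{E^{\alpha}-E^{\alpha(B_a-\ell)/B_a}}{E^{\alpha/B_a}-1}\right)$. *)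

theory Defs
  imports Complex_Main
begin

definition EE :: "nat \<Rightarrow> real" where
  "EE Ba = (1 + 1 / real Ba) ^ Ba"

definition cc :: "real \<Rightarrow> nat \<Rightarrow> real" where
  "cc \<alpha> Ba = (EE Ba powr (\<alpha> / real Ba) - 1) / (EE Ba powr \<alpha> - 1)"

definition eB :: "nat \<Rightarrow> real" where
  "eB B = (1 + 1 / real B) ^ B"

definition alphaB :: "real \<Rightarrow> nat \<Rightarrow> real" where
  "alphaB \<alpha> B = real B * (eB B powr (\<alpha> / real B) - 1)"

definition alphaBa :: "real \<Rightarrow> nat \<Rightarrow> real" where
  "alphaBa \<alpha> Ba = real Ba * (EE Ba powr (\<alpha> / real Ba) - 1)"

definition phi :: "real \<Rightarrow> nat \<Rightarrow> nat \<Rightarrow> nat \<Rightarrow> int \<Rightarrow> int \<Rightarrow> real" where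
  "phi \<alpha> B Ba l I i =
     (real Ba - real l) * cc \<alpha> Ba * EE Ba powr (\<alpha> * real_of_int (I - i) / real Ba)
     + (1 / alphaB \<alpha> B) * ((EE Ba powr \<alpha> - EE Ba powr (\<alpha> * real_of_int (I - int l - i) / real Ba))
                              / (EE Ba powr \<alpha> - 1))"

definition psi :: "real \<Rightarrow> nat \<Rightarrow> nat \<Rightarrow> int \<Rightarrow> int \<Rightarrow> real" where
  "psi \<alpha> Ba l I i = 1 + (real Ba - real l) * cc \<alpha> Ba * EE Ba powr (\<alpha> * real_of_int (I - i) / real Ba)"

definition Omega :: "real \<Rightarrow> nat \<Rightarrow> nat \<Rightarrow> nat \<Rightarrow> real" where
  "Omega \<alpha> B Ba l =
     (1 / alphaB \<alpha> B) * (1 / (EE Ba powr \<alpha> - 1)) *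
     (real l * EE Ba powr \<alpha>
      - (EE Ba powr \<alpha> - EE Ba powr (\<alpha> * (real Ba - real l) / real Ba)) / (EE Ba powr (\<alpha> / real Ba) - 1))"

definition tau :: "real \<Rightarrow> nat \<Rightarrow> nat \<Rightarrow> real" where
  "tau \<alpha> B Ba = 1 + (1 / (EE Ba powr \<alpha> - 1)) * (1 / alphaB \<alpha> B) *
      (EE Ba powr \<alpha> - (EE Ba powr \<alpha> - 1) / alphaBa \<alpha> Ba)"

definition Psi :: "real \<Rightarrow> nat \<Rightarrow> nat \<Rightarrow> int \<Rightarrow> real" where
  "Psi \<alpha> Ba l I = (\<Sum>i\<in>{I - int l + 1..I}. psi \<alpha> Ba l I i)"

definition MM :: "real \<Rightarrow> nat \<Rightarrow> nat \<Rightarrow> nat \<Rightarrow> int \<Rightarrow> real" where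
  "MM \<alpha> B Ba l I = (if l \<ge> 1 then max (tau \<alpha> B Ba) (Psi \<alpha> Ba l I / real l) else tau \<alpha> B Ba)"

end

theory Submission
  imports Defs
begin

text \<open>
  Put q = E^(\<alpha>/B_a) and read the indices backwards, j = I - i: every coefficient becomes a
  polynomial in q, and v_j = w_(I-j) is a nonnegative nonincreasing sequence. Since
  w_(I-B_a) \<le> w_(I-B_a+1), the \<Omega>-term can be moved onto the last coefficient, and then by Abel
  summation it suffices that every initial segment of the coefficient sequence c_0, ..., c_(B_a-1)
  sums to at most M times its length. The whole sequence sums to B_a \<tau>. For j < \<ell> the
  coefficients \<psi> increase, so their initial means are at most \<Psi>/\<ell>. For j \<ge> \<ell> the coefficient \<phi>
  is an affine function of q^(j-\<ell>): if its slope is nonnegative the coefficients increase,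
  otherwise they are all at most \<phi>_\<ell> \<le> \<tau>. Either way a coefficient exceeding M is followed only
  by coefficients at least M, which bounds the initial sums ending in this range by those ending
  at \<ell> and at B_a.
\<close>

lemma summation_by_parts_lessThan:
  fixes b v :: "nat \<Rightarrow> 'a::comm_ring"
  shows "(\<Sum>j<n. b j * v j) = (\<Sum>t<n. (\<Sum>j<Suc t. b j) * (v t - v (Suc t))) + (\<Sum>j<n. b j) * v n"
  by (induction n) (simp_all add: algebra_simps)

lemma sum_mult_le_if_partial_sums_le:
  fixes c v :: "nat \<Rightarrow> real"
  assumes partial: "\<And>t. t \<le> n \<Longrightarrow> (\<Sum>j<t. c j) \<le> M * real t"
    and antimono: "\<And>j. v (Suc j) \<le> v j" and nonneg: "\<And>j. 0 \<le> v j"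
  shows "(\<Sum>j<n. c j * v j) \<le> M * (\<Sum>j<n. v j)"
proof -
  let ?b = "\<lambda>j. c j - M"
  have "(\<Sum>j<n. ?b j * v j) = (\<Sum>t<n. (\<Sum>j<Suc t. ?b j) * (v t - v (Suc t))) + (\<Sum>j<n. ?b j) * v n"
    by (rule summation_by_parts_lessThan)
  also have "\<dots> \<le> 0"
  proof (rule add_nonpos_nonpos)
    have "(\<Sum>j<Suc t. ?b j) \<le> 0" if "t < n" for t
      using partial[of "Suc t"] that by (simp add: sum_subtractf mult.commute)
    then show "(\<Sum>t<n. (\<Sum>j<Suc t. ?b j) * (v t - v (Suc t))) \<le> 0"
      using antimono by (auto intro!: sum_nonpos mult_nonpos_nonneg)
    show "(\<Sum>j<n. ?b j) * v n \<le> 0"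
      using partial[of n] nonneg[of n] by (intro mult_nonpos_nonneg) (simp_all add: sum_subtractf mult.commute)
  qed
  finally show ?thesis by (simp add: algebra_simps sum_subtractf sum_distrib_left)
qed

lemma mono_partial_mean_le:
  fixes f :: "nat \<Rightarrow> real"
  assumes "mono f" and "t \<le> l"
  shows "real l * (\<Sum>j<t. f j) \<le> real t * (\<Sum>j<l. f j)"
proof -
  have head: "(\<Sum>j<t. f j) \<le> real t * f t"
    using sum_bounded_above[of "{..<t}" f "f t"] monoD[OF \<open>mono f\<close>] by simp
  have tail: "real (l - t) * f t \<le> (\<Sum>j\<in>{t..<l}. f j)"
    using sum_bounded_below[of "{t..<l}" "f t" f] monoD[OF \<open>mono f\<close>] by simp
  have split: "(\<Sum>j<l. f j) = (\<Sum>j<t. f j) + (\<Sum>j\<in>{t..<l}. f j)"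
    using sum.atLeastLessThan_concat[of 0 t l f] \<open>t \<le> l\<close> by (simp add: atLeast0LessThan)
  have "real (l - t) * (\<Sum>j<t. f j) \<le> real (l - t) * (real t * f t)"
    using head by (intro mult_left_mono) auto
  also have "\<dots> \<le> real t * (\<Sum>j\<in>{t..<l}. f j)"
    using mult_left_mono[OF tail, of "real t"] by (simp add: algebra_simps)
  finally show ?thesis
    unfolding split using \<open>t \<le> l\<close> by (simp add: algebra_simps of_nat_diff)
qed

lemma partial_sum_le_if_single_crossing:
  fixes c :: "nat \<Rightarrow> real"
  assumes "l \<le> t" and "t \<le> n"
    and head: "(\<Sum>j<l. c j) \<le> M * real l" and total: "(\<Sum>j<n. c j) \<le> M * real n"
    and crossing: "\<And>j k. l \<le> j \<Longrightarrow> j \<le> k \<Longrightarrow> k < n \<Longrightarrow> M < c j \<Longrightarrow> M \<le> c k"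
  shows "(\<Sum>j<t. c j) \<le> M * real t"
proof (cases "\<forall>j\<in>{l..<t}. c j \<le> M")
  case True
  then have "(\<Sum>j\<in>{l..<t}. c j) \<le> real (t - l) * M"
    using sum_bounded_above[of "{l..<t}" c M] by simp
  moreover have "(\<Sum>j<t. c j) = (\<Sum>j<l. c j) + (\<Sum>j\<in>{l..<t}. c j)"
    using sum.atLeastLessThan_concat[of 0 l t c] \<open>l \<le> t\<close> by (simp add: atLeast0LessThan)
  ultimately show ?thesis
    using head \<open>l \<le> t\<close> by (simp add: algebra_simps of_nat_diff)
next
  case False
  then obtain j0 where "j0 \<in> {l..<t}" and "M < c j0" by force
  then have "M \<le> c k" if "k \<in> {t..<n}" for k
    using crossing[of j0 k] that by auto
  then have "real (n - t) * M \<le> (\<Sum>j\<in>{t..<n}. c j)"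
    using sum_bounded_below[of "{t..<n}" M c] by simp
  moreover have "(\<Sum>j<n. c j) = (\<Sum>j<t. c j) + (\<Sum>j\<in>{t..<n}. c j)"
    using sum.atLeastLessThan_concat[of 0 t n c] \<open>t \<le> n\<close> by (simp add: atLeast0LessThan)
  ultimately show ?thesis
    using total \<open>t \<le> n\<close> by (simp add: algebra_simps of_nat_diff)
qed

lemma sum_int_interval_reflect:
  fixes f :: "int \<Rightarrow> 'a::comm_monoid_add"
  shows "(\<Sum>i\<in>{I - int b + 1..I - int a}. f i) = (\<Sum>j\<in>{a..<b}. f (I - int j))"
  by (rule sum.reindex_bij_witness[of _ "\<lambda>j. I - int j" "\<lambda>i. nat (I - i)"]) auto

text \<open>
  The coefficients in terms of q = E^(\<alpha>/B_a), \<beta> = \<alpha>_B, n = B_a and j = I - i, so that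
  E^\<alpha> = q^n, c = (q - 1)/(q^n - 1) and \<alpha>_(B_a) = n (q - 1). phi_geom is only used for
  j \<ge> l, where j - l does not truncate.
\<close>

definition psi_geom :: "real \<Rightarrow> nat \<Rightarrow> nat \<Rightarrow> nat \<Rightarrow> real" where
  "psi_geom q n l j = 1 + (real n - real l) * ((q - 1) / (q ^ n - 1)) * q ^ j"

definition phi_geom :: "real \<Rightarrow> real \<Rightarrow> nat \<Rightarrow> nat \<Rightarrow> nat \<Rightarrow> real" where
  "phi_geom q \<beta> n l j = (real n - real l) * ((q - 1) / (q ^ n - 1)) * q ^ j
     + (1 / \<beta>) * ((q ^ n - q ^ (j - l)) / (q ^ n - 1))"

definition Omega_geom :: "real \<Rightarrow> real \<Rightarrow> nat \<Rightarrow> nat \<Rightarrow> real" where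
  "Omega_geom q \<beta> n l =
     (1 / \<beta>) * (1 / (q ^ n - 1)) * (real l * q ^ n - (q ^ n - q ^ (n - l)) / (q - 1))"

definition tau_geom :: "real \<Rightarrow> real \<Rightarrow> nat \<Rightarrow> real" where
  "tau_geom q \<beta> n = 1 + (1 / (q ^ n - 1)) * (1 / \<beta>) * (q ^ n - (q ^ n - 1) / (real n * (q - 1)))"

locale geometric_weights =
  fixes q \<beta> :: real and n l :: nat
  assumes l_le_n: "l \<le> n" and ratio_ge: "1 \<le> real n * (q - 1)" and beta_ge: "1 \<le> \<beta>"
begin

lemma n_pos: "0 < n"
  using ratio_ge by (cases n) auto

lemma q_gt_1: "1 < q"
  using ratio_ge n_pos by (smt (verit) mult_nonneg_nonpos of_nat_0_le_iff)

lemma q_power_n_gt_1: "1 < q ^ n"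
  using q_gt_1 n_pos by (simp add: one_less_power)

lemma Omega_geom_nonneg: "0 \<le> Omega_geom q \<beta> n l"
proof -
  have "(\<Sum>k<l. q ^ k) \<le> real l * q ^ l"
    using sum_bounded_above[of "{..<l}" "\<lambda>k. q ^ k" "q ^ l"] q_gt_1 by (simp add: power_increasing)
  then have "(q ^ l - 1) / (q - 1) \<le> real l * q ^ l"
    using q_gt_1 by (simp add: geometric_sum)
  then have "q ^ (n - l) * ((q ^ l - 1) / (q - 1)) \<le> q ^ (n - l) * (real l * q ^ l)"
    using q_gt_1 by (intro mult_left_mono) auto
  moreover have "q ^ (n - l) * q ^ l = q ^ n"
    using l_le_n by (simp add: power_add[symmetric])
  ultimately have "(q ^ n - q ^ (n - l)) / (q - 1) \<le> real l * q ^ n"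
    by (simp add: algebra_simps diff_divide_distrib)
  then show ?thesis
    unfolding Omega_geom_def using q_power_n_gt_1 beta_ge by simp
qed

lemma psi_geom_mono: "mono (psi_geom q n l)"
proof
  fix i j :: nat assume "i \<le> j"
  then have "q ^ i \<le> q ^ j" using q_gt_1 by (simp add: power_increasing)
  moreover have "0 \<le> (real n - real l) * ((q - 1) / (q ^ n - 1))"
    using l_le_n q_gt_1 q_power_n_gt_1 by simp
  ultimately show "psi_geom q n l i \<le> psi_geom q n l j"
    unfolding psi_geom_def by (intro add_left_mono mult_left_mono) auto
qed

definition slope :: real where
  "slope = (real n - real l) * (q - 1) * q ^ l - 1 / \<beta>"

lemma phi_geom_affine: "l \<le> j \<Longrightarrow> phi_geom q \<beta> n l j = (q ^ (j - l) * slope + q ^ n / \<beta>) / (q ^ n - 1)"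
proof -
  assume "l \<le> j"
  then have "q ^ j = q ^ l * q ^ (j - l)" by (simp add: power_add[symmetric])
  moreover have "q ^ n - 1 \<noteq> 0" and "\<beta> \<noteq> 0" using q_power_n_gt_1 beta_ge by auto
  ultimately show ?thesis
    unfolding phi_geom_def slope_def by (simp add: divide_simps) (simp add: algebra_simps)
qed

lemma phi_geom_mono:
  assumes "0 \<le> slope" and "l \<le> j" and "j \<le> k"
  shows "phi_geom q \<beta> n l j \<le> phi_geom q \<beta> n l k"
proof -
  have "q ^ (j - l) * slope \<le> q ^ (k - l) * slope"
    using assms q_gt_1 by (intro mult_right_mono power_increasing) auto
  then show ?thesis
    using assms q_power_n_gt_1 by (simp add: phi_geom_affine divide_right_mono)
qed

lemma phi_geom_le_tau_geom:
  assumes "slope < 0" and "l \<le> j"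
  shows "phi_geom q \<beta> n l j \<le> tau_geom q \<beta> n"
proof -
  have "q ^ (j - l) * slope \<le> slope"
    using assms q_gt_1 by (simp add: mult_le_cancel_right2)
  then have "phi_geom q \<beta> n l j \<le> (slope + q ^ n / \<beta>) / (q ^ n - 1)"
    using assms q_power_n_gt_1 by (simp add: phi_geom_affine divide_right_mono)
  also have "\<dots> = slope / (q ^ n - 1) + q ^ n / (\<beta> * (q ^ n - 1))"
    using beta_ge by (simp add: add_divide_distrib)
  also have "\<dots> \<le> 1 - 1 / (\<beta> * (real n * (q - 1))) + q ^ n / (\<beta> * (q ^ n - 1))"
  proof -
    have "1 \<le> \<beta> * (real n * (q - 1))"
      using beta_ge ratio_ge by (metis mult_mono' mult_1 zero_le_one)
    then have "0 \<le> 1 - 1 / (\<beta> * (real n * (q - 1)))" by simp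
    moreover have "slope / (q ^ n - 1) < 0"
      using assms q_power_n_gt_1 by (simp add: divide_neg_pos)
    ultimately show ?thesis by linarith
  qed
  also have "\<dots> = tau_geom q \<beta> n"
  proof -
    have "q ^ n - 1 \<noteq> 0" and "\<beta> \<noteq> 0" using q_power_n_gt_1 beta_ge by auto
    moreover have "real n * (q - 1) \<noteq> 0" using ratio_ge by linarith
    ultimately show ?thesis
      unfolding tau_geom_def by (simp add: divide_simps) (simp add: algebra_simps)
  qed
  finally show ?thesis .
qed

text \<open>
  Since v_n \<le> v_(n-1), the term \<Omega> v_n of the weighted sum is absorbed into the last coefficient.
\<close>

definition coeff :: "nat \<Rightarrow> real" where
  "coeff j = (if j < l then psi_geom q n l j else phi_geom q \<beta> n l j)
             + (if j = n - 1 then Omega_geom q \<beta> n l else 0)"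

lemma sum_coeff: "(\<Sum>j<n. coeff j) = real n * tau_geom q \<beta> n"
proof -
  define K where "K = (real n - real l) * ((q - 1) / (q ^ n - 1))"
  have geom: "(\<Sum>j<k. q ^ j) = (q ^ k - 1) / (q - 1)" for k
    using q_gt_1 by (simp add: geometric_sum)
  have psi: "(\<Sum>j<l. psi_geom q n l j) = real l + K * (\<Sum>j<l. q ^ j)"
    unfolding psi_geom_def K_def by (simp add: sum.distrib sum_distrib_left)
  have "(\<Sum>j\<in>{l..<n}. q ^ (j - l)) = (\<Sum>j<n - l. q ^ j)"
    using sum.shift_bounds_nat_ivl[of "\<lambda>j. q ^ (j - l)" 0 l "n - l"] l_le_n
    by (simp add: atLeast0LessThan)
  then have "(\<Sum>j\<in>{l..<n}. q ^ n - q ^ (j - l)) = real (n - l) * q ^ n - (q ^ (n - l) - 1) / (q - 1)"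
    by (simp add: sum_subtractf geom)
  then have phi: "(\<Sum>j\<in>{l..<n}. phi_geom q \<beta> n l j) = K * (\<Sum>j\<in>{l..<n}. q ^ j)
      + (1 / \<beta>) * (1 / (q ^ n - 1)) * (real (n - l) * q ^ n - (q ^ (n - l) - 1) / (q - 1))"
    unfolding phi_geom_def K_def by (simp add: sum.distrib sum_distrib_left sum_divide_distrib[symmetric])
  have "(\<Sum>j<n. coeff j) = (\<Sum>j<l. psi_geom q n l j) + (\<Sum>j\<in>{l..<n}. phi_geom q \<beta> n l j)
                            + Omega_geom q \<beta> n l"
    using sum.atLeastLessThan_concat[of 0 l n "\<lambda>j. if j < l then psi_geom q n l j else phi_geom q \<beta> n l j"]
      l_le_n n_pos unfolding coeff_def by (simp add: sum.distrib atLeast0LessThan)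
  also have "\<dots> = real l + K * (\<Sum>j<n. q ^ j) + (1 / \<beta>) * (1 / (q ^ n - 1))
      * (real n * q ^ n - (q ^ n - 1) / (q - 1))"
  proof -
    have "(\<Sum>j<n. q ^ j) = (\<Sum>j<l. q ^ j) + (\<Sum>j\<in>{l..<n}. q ^ j)"
      using sum.atLeastLessThan_concat[of 0 l n "\<lambda>j. q ^ j"] l_le_n by (simp add: atLeast0LessThan)
    then show ?thesis
      unfolding psi phi Omega_geom_def using l_le_n
      by (simp add: of_nat_diff algebra_simps diff_divide_distrib)
  qed
  also have "\<dots> = real n * tau_geom q \<beta> n"
  proof -
    have "q ^ n - 1 \<noteq> 0" using q_power_n_gt_1 by linarith
    moreover have "q - 1 \<noteq> 0" and "\<beta> \<noteq> 0" and "real n \<noteq> 0"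
      using q_gt_1 beta_ge n_pos by auto
    ultimately show ?thesis
      unfolding K_def geom tau_geom_def by (simp add: divide_simps)
  qed
  finally show ?thesis .
qed

lemma coeff_single_crossing:
  assumes "tau_geom q \<beta> n \<le> M" and "l \<le> j" and "j \<le> k" and "k < n" and "M < coeff j"
  shows "M \<le> coeff k"
proof (cases "0 \<le> slope")
  case True
  have "phi_geom q \<beta> n l j \<le> phi_geom q \<beta> n l k"
    using phi_geom_mono[OF True] assms by blast
  then have "coeff j \<le> coeff k"
    using assms Omega_geom_nonneg unfolding coeff_def by auto
  then show ?thesis using assms by simp
next
  case False
  then have "j = n - 1"
    using phi_geom_le_tau_geom[of j] assms unfolding coeff_def by (auto split: if_splits)
  then have "k = j" using assms by simp
  then show ?thesis using assms by simp
qed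

lemma partial_sum_coeff_le:
  assumes tau: "tau_geom q \<beta> n \<le> M"
    and psi: "1 \<le> l \<Longrightarrow> (\<Sum>j<l. psi_geom q n l j) \<le> M * real l"
    and "t \<le> n"
  shows "(\<Sum>j<t. coeff j) \<le> M * real t"
proof -
  have total: "(\<Sum>j<n. coeff j) \<le> M * real n"
    using mult_left_mono[OF tau, of "real n"] by (simp add: sum_coeff mult.commute)
  have head: "(\<Sum>j<s. coeff j) \<le> M * real s" if "s \<le> l" and "s < n" for s
  proof (cases "l = 0")
    case False
    have "(\<Sum>j<s. coeff j) = (\<Sum>j<s. psi_geom q n l j)"
      using that by (intro sum.cong) (auto simp: coeff_def)
    then have "real l * (\<Sum>j<s. coeff j) \<le> real s * (\<Sum>j<l. psi_geom q n l j)"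
      using mono_partial_mean_le[OF psi_geom_mono \<open>s \<le> l\<close>] by simp
    also have "\<dots> \<le> real l * (M * real s)"
      using mult_left_mono[OF psi, of "real s"] False by (simp add: algebra_simps)
    finally show ?thesis using False by simp
  qed (use that in simp)
  have "(\<Sum>j<l. coeff j) \<le> M * real l"
    using head[of l] total l_le_n by (cases "l = n") auto
  show ?thesis
  proof (cases "t \<le> l")
    case True
    then show ?thesis using head[of t] total \<open>t \<le> n\<close> by (cases "t = n") auto
  next
    case False
    then show ?thesis
      using partial_sum_le_if_single_crossing[of l t n coeff M] coeff_single_crossing[OF tau]
        \<open>(\<Sum>j<l. coeff j) \<le> M * real l\<close> total \<open>t \<le> n\<close>
      by simp
  qed
qed

lemma weighted_sum_le:
  fixes v :: "nat \<Rightarrow> real"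
  assumes "tau_geom q \<beta> n \<le> M"
    and "1 \<le> l \<Longrightarrow> (\<Sum>j<l. psi_geom q n l j) \<le> M * real l"
    and antimono: "\<And>j. v (Suc j) \<le> v j" and nonneg: "\<And>j. 0 \<le> v j"
  shows "(\<Sum>j<n. (if j < l then psi_geom q n l j else phi_geom q \<beta> n l j) * v j)
           + Omega_geom q \<beta> n l * v n \<le> M * (\<Sum>j<n. v j)"
proof -
  have "Omega_geom q \<beta> n l * v n \<le> Omega_geom q \<beta> n l * v (n - 1)"
    using antimono[of "n - 1"] n_pos Omega_geom_nonneg by (intro mult_left_mono) auto
  moreover have "(\<Sum>j<n. coeff j * v j)
      = (\<Sum>j<n. (if j < l then psi_geom q n l j else phi_geom q \<beta> n l j) * v j)
        + Omega_geom q \<beta> n l * v (n - 1)"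
  proof -
    have "coeff j * v j = (if j < l then psi_geom q n l j else phi_geom q \<beta> n l j) * v j
        + (if j = n - 1 then Omega_geom q \<beta> n l * v j else 0)" for j
      unfolding coeff_def by (simp add: distrib_right)
    then show ?thesis using n_pos by (simp add: sum.distrib)
  qed
  moreover have "(\<Sum>j<n. coeff j * v j) \<le> M * (\<Sum>j<n. v j)"
    using sum_mult_le_if_partial_sums_le partial_sum_coeff_le assms by blast
  ultimately show ?thesis by linarith
qed

end

lemma EE_pos: "0 < EE m"
  unfolding EE_def by (simp add: add_pos_nonneg)

lemma EE_powr_eq_power: "EE m powr (\<alpha> * real j / real m) = (EE m powr (\<alpha> / real m)) ^ j"
proof -
  have "EE m powr (\<alpha> * real j / real m) = (EE m powr (\<alpha> / real m)) powr real j"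
    by (simp add: powr_powr)
  moreover have "0 < EE m powr (\<alpha> / real m)" using EE_pos[of m] by simp
  ultimately show ?thesis by (simp add: powr_realpow)
qed

lemma EE_powr_eq_power_self: "0 < m \<Longrightarrow> EE m powr \<alpha> = (EE m powr (\<alpha> / real m)) ^ m"
  using EE_powr_eq_power[of m \<alpha> m] by simp

lemma alphaBa_ge_1:
  assumes "0 < m" and "1 \<le> \<alpha>"
  shows "1 \<le> alphaBa \<alpha> m"
proof -
  have "EE m = (1 + 1 / real m) powr real m"
    unfolding EE_def by (simp add: powr_realpow add_pos_nonneg)
  then have "1 + 1 / real m = EE m powr (1 / real m)"
    using assms(1) by (simp add: powr_powr)
  also have "\<dots> \<le> EE m powr (\<alpha> / real m)"
    using assms unfolding EE_def by (intro powr_mono divide_right_mono) auto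
  finally have "real m * (1 / real m) \<le> real m * (EE m powr (\<alpha> / real m) - 1)"
    by (intro mult_left_mono) auto
  then show ?thesis unfolding alphaBa_def using assms(1) by simp
qed

lemma alphaB_eq_alphaBa: "alphaB = alphaBa"
  by (simp add: fun_eq_iff alphaB_def alphaBa_def eB_def EE_def)

context
  fixes \<alpha> :: real and B Ba l :: nat and I :: int and q :: real
  assumes Ba_pos: "0 < Ba"
  defines "q \<equiv> EE Ba powr (\<alpha> / real Ba)"
begin

lemma EE_powr_eq_q_power: "EE Ba powr (\<alpha> * real j / real Ba) = q ^ j"
  unfolding q_def by (rule EE_powr_eq_power)

lemma EE_powr_alpha: "EE Ba powr \<alpha> = q ^ Ba"
  unfolding q_def by (rule EE_powr_eq_power_self[OF Ba_pos])

lemma cc_eq: "cc \<alpha> Ba = (q - 1) / (q ^ Ba - 1)"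
  unfolding cc_def EE_powr_alpha q_def[symmetric] ..

lemma psi_eq_psi_geom: "psi \<alpha> Ba l I (I - int j) = psi_geom q Ba l j"
  unfolding psi_def psi_geom_def cc_eq using EE_powr_eq_q_power[of j] by simp

lemma phi_eq_phi_geom:
  assumes "l \<le> j"
  shows "phi \<alpha> B Ba l I (I - int j) = phi_geom q (alphaB \<alpha> B) Ba l j"
proof -
  have "real_of_int (I - int l - (I - int j)) = real (j - l)" using assms by simp
  then have "EE Ba powr (\<alpha> * real_of_int (I - int l - (I - int j)) / real Ba) = q ^ (j - l)"
    by (simp only: EE_powr_eq_q_power)
  then show ?thesis
    unfolding phi_def phi_geom_def cc_eq EE_powr_alpha using EE_powr_eq_q_power[of j] by simp
qed

lemma Omega_eq_Omega_geom:
  assumes "l \<le> Ba"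
  shows "Omega \<alpha> B Ba l = Omega_geom q (alphaB \<alpha> B) Ba l"
proof -
  have "real Ba - real l = real (Ba - l)" using assms by simp
  then have "EE Ba powr (\<alpha> * (real Ba - real l) / real Ba) = q ^ (Ba - l)"
    by (simp only: EE_powr_eq_q_power)
  then show ?thesis
    unfolding Omega_def Omega_geom_def EE_powr_alpha q_def[symmetric] by simp
qed

lemma tau_eq_tau_geom: "tau \<alpha> B Ba = tau_geom q (alphaB \<alpha> B) Ba"
  unfolding tau_def tau_geom_def alphaBa_def EE_powr_alpha q_def[symmetric] ..

lemma Psi_eq_sum_psi_geom: "Psi \<alpha> Ba l I = (\<Sum>j<l. psi_geom q Ba l j)"
  unfolding Psi_def using sum_int_interval_reflect[of "psi \<alpha> Ba l I" I l 0]
  by (simp add: psi_eq_psi_geom atLeast0LessThan)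

lemma weighted_sum_eq_weighted_sum_geom:
  fixes w :: "int \<Rightarrow> real"
  assumes "l \<le> Ba"
  shows "(\<Sum>i\<in>{I - int Ba + 1..I - int l}. phi \<alpha> B Ba l I i * w i)
         + (\<Sum>i\<in>{I - int l + 1..I}. psi \<alpha> Ba l I i * w i)
         + w (I - int Ba) * Omega \<alpha> B Ba l
       = (\<Sum>j<Ba. (if j < l then psi_geom q Ba l j else phi_geom q (alphaB \<alpha> B) Ba l j) * w (I - int j))
         + Omega_geom q (alphaB \<alpha> B) Ba l * w (I - int Ba)"
proof -
  let ?f = "\<lambda>j. (if j < l then psi_geom q Ba l j else phi_geom q (alphaB \<alpha> B) Ba l j) * w (I - int j)"
  have "(\<Sum>i\<in>{I - int Ba + 1..I - int l}. phi \<alpha> B Ba l I i * w i) = (\<Sum>j\<in>{l..<Ba}. ?f j)"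
    unfolding sum_int_interval_reflect by (intro sum.cong) (auto simp: phi_eq_phi_geom)
  moreover have "(\<Sum>i\<in>{I - int l + 1..I}. psi \<alpha> Ba l I i * w i) = (\<Sum>j<l. ?f j)"
    using sum_int_interval_reflect[of "\<lambda>i. psi \<alpha> Ba l I i * w i" I l 0]
    by (simp add: psi_eq_psi_geom atLeast0LessThan)
  moreover have "(\<Sum>j<Ba. ?f j) = (\<Sum>j<l. ?f j) + (\<Sum>j\<in>{l..<Ba}. ?f j)"
    using sum.atLeastLessThan_concat[of 0 l Ba ?f] assms by (simp add: atLeast0LessThan)
  ultimately show ?thesis
    using Omega_eq_Omega_geom[OF assms] by (simp add: mult.commute)
qed

end

lemma reflected_weights_nonneg_antimono:
  fixes w :: "int \<Rightarrow> real"
  assumes zero: "\<And>k. k \<le> 0 \<Longrightarrow> w k = 0" and w1: "I \<ge> 1 \<Longrightarrow> 0 \<le> w 1"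
    and mono: "\<And>j k. 1 \<le> j \<Longrightarrow> j \<le> k \<Longrightarrow> k \<le> I \<Longrightarrow> w j \<le> w k"
  shows "0 \<le> w (I - int j)" and "w (I - int (Suc j)) \<le> w (I - int j)"
proof -
  have nonneg: "0 \<le> w k" if "k \<le> I" for k
    using zero[of k] w1 mono[of 1 k] that by (cases "k \<le> 0") auto
  then show "0 \<le> w (I - int j)" by simp
  show "w (I - int (Suc j)) \<le> w (I - int j)"
    using zero[of "I - int (Suc j)"] nonneg[of "I - int j"] mono[of "I - int (Suc j)" "I - int j"]
    by (cases "I - int (Suc j) \<le> 0") auto
qed

theorem lemmaA8:
  fixes \<alpha> :: real and B Ba l :: nat and I :: int and w :: "int \<Rightarrow> real"
  assumes "\<alpha> \<ge> 1"
    and "0 < B" and "B \<le> Ba"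
    and "l \<le> Ba" and "I \<ge> int l"
    and "\<And>k. k \<le> 0 \<Longrightarrow> w k = 0"
    and "I \<ge> 1 \<Longrightarrow> 0 \<le> w 1"
    and "\<And>j k. 1 \<le> j \<Longrightarrow> j \<le> k \<Longrightarrow> k \<le> I \<Longrightarrow> w j \<le> w k"
  shows "(\<Sum>i\<in>{I - int Ba + 1..I - int l}. phi \<alpha> B Ba l I i * w i)
         + (\<Sum>i\<in>{I - int l + 1..I}. psi \<alpha> Ba l I i * w i)
         + w (I - int Ba) * Omega \<alpha> B Ba l
         \<le> MM \<alpha> B Ba l I * (\<Sum>i\<in>{I - int Ba + 1..I}. w i)"
proof -
  define q where "q = EE Ba powr (\<alpha> / real Ba)"
  have Ba_pos: "0 < Ba" using assms(2,3) by simp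
  interpret geometric_weights q "alphaB \<alpha> B" Ba l
  proof
    show "1 \<le> real Ba * (q - 1)"
      using alphaBa_ge_1[OF Ba_pos assms(1)] unfolding alphaBa_def q_def .
    show "1 \<le> alphaB \<alpha> B"
      using alphaBa_ge_1[OF assms(2,1)] by (simp add: alphaB_eq_alphaBa)
  qed (rule assms(4))
  have "tau_geom q (alphaB \<alpha> B) Ba \<le> MM \<alpha> B Ba l I"
    using tau_eq_tau_geom[OF Ba_pos] unfolding MM_def q_def by auto
  moreover have "(\<Sum>j<l. psi_geom q Ba l j) \<le> MM \<alpha> B Ba l I * real l" if "1 \<le> l"
  proof -
    have "Psi \<alpha> Ba l I / real l \<le> MM \<alpha> B Ba l I" using that unfolding MM_def by simp
    then show ?thesis using that Psi_eq_sum_psi_geom[OF Ba_pos] unfolding q_def by (simp add: divide_le_eq)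
  qed
  ultimately have "(\<Sum>j<Ba. (if j < l then psi_geom q Ba l j else phi_geom q (alphaB \<alpha> B) Ba l j) * w (I - int j))
      + Omega_geom q (alphaB \<alpha> B) Ba l * w (I - int Ba) \<le> MM \<alpha> B Ba l I * (\<Sum>j<Ba. w (I - int j))"
  proof (rule weighted_sum_le)
    show "0 \<le> w (I - int j)" for j
      using assms(6-8) by (rule reflected_weights_nonneg_antimono(1))
    show "w (I - int (Suc j)) \<le> w (I - int j)" for j
      using assms(6-8) by (rule reflected_weights_nonneg_antimono(2))
  qed
  then show ?thesis
    using weighted_sum_eq_weighted_sum_geom[OF Ba_pos assms(4)] sum_int_interval_reflect[of w I Ba 0]
    unfolding q_def by (simp add: atLeast0LessThan)
qed

end
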